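(* Let $(M,d)$ be a complete pointed metric space and let $A\subset\mathcal{R}(M)$ be Borel. Then $\mathcal{R}\setminus\Delta(A)\in\mathfrak{C}$; that is, whenever $\mu,\nu$ are positive Radon measures on $\beta\widetilde{M}$ with $\mu\preccurlyeq\nu$ and $\nu$ concentrated on $\mathcal{R}\setminus\Delta(A)$, $\mu$ is also concentrated on $\mathcal{R}\setminus\Delta(A)$.
   Context: $\widetilde{M}=\{(x,y)\in M\times M:x\ne y\}$, $\beta\widetilde{M}$ its Stone–Čech compactification; Radon measures identified with $C(\beta\widetilde{M})^*$. $d:\beta\widetilde{M}\to[0,\infty]$ continuously extends the metric on $\widetilde{M}$. $M^u$ is the uniform (Samuel) compactification of $M$; $p_1,p_2:\beta\widetilde{M}\to M^u$ continuously extend the coordinate projections, $p=(p_1,p_2)$. $\mathcal{R}(M)=\{\xi\in M^u:\overline{d_0}(\xi)<\infty\}$ (subspace topology), where $\overline{d_0}:M^u\to[0,\infty]$ continuously extends $x\mapsto d(x,0)$ ($0$ the base point), and $\mathcal{R}=p^{-1}(\mathcal{R}(M)\times\mathcal{R}(M))$. $\Delta(A)=d^{-1}(0)\cap p^{-1}(A\times A)$. $G$ is the set of $g\in C(\beta\widetilde{M})$ with $d(x,y)g(x,y)\le d(x,u)g(x,u)+d(u,y)g(u,y)$ for all distinct $x,u,y\in M$; $\mu\preccurlyeq\nu$ iff $\int g\,d\mu\le\int g\,d\nu$ for all $g\in G$. $\mathfrak{C}$ is the family of Borel sets $C\subset\beta\widetilde{M}$ with the stated preservation property. Throughout, $M$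 has at least three distinct points. *)

theory Defs
  imports "HOL-Analysis.Analysis"
begin

definition offdiag :: "('a \<times> 'a) set" where
  "offdiag = {(x, y). x \<noteq> y}"

text \<open>(K, e) is a Stone--Cech compactification of the space offdiag (subspace
  topology of M x M): K is compact Hausdorff (the Hausdorff property is the type
  class t2_space), e is a homeomorphism of offdiag onto a dense subset of K, and
  every bounded continuous real function on offdiag extends continuously to K.\<close>
definition stone_cech_offdiag ::
  "(('a::metric_space \<times> 'a) \<Rightarrow> 'k::t2_space) \<Rightarrow> bool" where
  "stone_cech_offdiag e \<longleftrightarrow>
     compact (UNIV :: 'k set) \<and>
     (\<exists>e'. homeomorphism offdiag (e ` offdiag) e e') \<and>
     closure (e ` offdiag) = UNIV \<and>
     (\<forall>f :: 'a \<times> 'a \<Rightarrow> real. continuous_on offdiag f \<and> bounded (f ` offdiag) \<longrightarrow>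
        (\<exists>F :: 'k \<Rightarrow> real. continuous_on UNIV F \<and> (\<forall>z\<in>offdiag. F (e z) = f z)))"

definition samuel_compactification :: "('a::metric_space \<Rightarrow> 'l::t2_space) \<Rightarrow> bool" where
  "samuel_compactification j \<longleftrightarrow>
     compact (UNIV :: 'l set) \<and>
     (\<exists>j'. homeomorphism UNIV (range j) j j') \<and>
     closure (range j) = UNIV \<and>
     (\<forall>f :: 'a \<Rightarrow> real. uniformly_continuous_on UNIV f \<and> bounded (range f) \<longrightarrow>
        (\<exists>F :: 'l \<Rightarrow> real. continuous_on UNIV F \<and> (\<forall>x. F (j x) = f x))) \<and>
     (\<forall>F :: 'l \<Rightarrow> real. continuous_on UNIV F \<longrightarrow> uniformly_continuous_on UNIV (F \<circ> j))"

definition radon_measure :: "'k::topological_space measure \<Rightarrow> bool" where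
  "radon_measure \<mu> \<longleftrightarrow>
     sets \<mu> = sets borel \<and> finite_measure \<mu> \<and>
     (\<forall>B \<in> sets borel. emeasure \<mu> B = (SUP C \<in> {C. compact C \<and> C \<subseteq> B}. emeasure \<mu> C))"

definition concentrated_on :: "'k measure \<Rightarrow> 'k set \<Rightarrow> bool" where
  "concentrated_on \<mu> S \<longleftrightarrow> (\<exists>N \<in> sets \<mu>. emeasure \<mu> N = 0 \<and> space \<mu> - S \<subseteq> N)"

definition Gset :: "(('a::metric_space \<times> 'a) \<Rightarrow> 'k::topological_space) \<Rightarrow> ('k \<Rightarrow> real) set" where
  "Gset e = {g. continuous_on UNIV g \<and>
     (\<forall>x u y. x \<noteq> u \<and> u \<noteq> y \<and> x \<noteq> y \<longrightarrow>
        dist x y * g (e (x, y)) \<le> dist x u * g (e (x, u)) + dist u y * g (e (u, y)))}"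

definition meas_preceq ::
  "(('a::metric_space \<times> 'a) \<Rightarrow> 'k::topological_space) \<Rightarrow> 'k measure \<Rightarrow> 'k measure \<Rightarrow> bool" where
  "meas_preceq e \<mu> \<nu> \<longleftrightarrow> (\<forall>g \<in> Gset e. integral\<^sup>L \<mu> g \<le> integral\<^sup>L \<nu> g)"

end

theory Submission
  imports Defs
begin

(* Testing mu <= nu against (extensions to beta M~ of) the functions
     g_h(x, y) = min 1 ((h x + h y) / d(x, y)),   h >= 0 and 1-Lipschitz,
   which satisfy the weighted triangle inequality and hence lie in G, transfers mass bounds
   from nu to mu.  For h = max 0 (d(., 0) - n) the extension is >= 1 outside R and vanishes
   where both projections lie in the n-ball, so mu(-R) is bounded by the nu-measure of a
   sequence of sets decreasing to -R, which is nu-null.  For a closed C in M^u and an open U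
   containing Delta(C), take a Urysohn function F that is 1 on C and 0 on the projection of
   the part of the diagonal outside U, and h a small Lipschitz bump on {F o j > 1/2}: the
   extension is >= 1 on Delta(C), small far from the diagonal and 0 away from C, whence
   mu(Delta(C)) <= nu(U) + eps, and outer regularity of nu gives mu(Delta(C)) <= nu(Delta(C)).
   Inner regularity of mu by compact sets K, each contained in Delta(p1 K u p2 K), finally
   gives mu(Delta(A)) = 0.  Every pointwise property of an extension is checked on the dense
   image of M~ and carried over by continuity. *)

lemma compact_t2_Urysohn:
  fixes S T :: "'k::t2_space set"
  assumes "compact (UNIV :: 'k set)" "closed S" "closed T" "S \<inter> T = {}"
  obtains f :: "'k \<Rightarrow> real"
    where "continuous_on UNIV f" "\<And>x. x \<in> S \<Longrightarrow> f x = 1" "\<And>x. x \<in> T \<Longrightarrow> f x = 0"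
proof -
  have "Hausdorff_space (euclidean :: 'k topology)"
    unfolding Hausdorff_space_def using hausdorff by (fastforce simp: disjnt_def)
  moreover have "compact_space (euclidean :: 'k topology)"
    using assms(1) by (simp add: compact_space_def)
  ultimately have "normal_space (euclidean :: 'k topology)"
    using compact_Hausdorff_or_regular_imp_normal_space by blast
  then obtain f where f: "continuous_map euclidean (top_of_set {0..1::real}) f"
    "f ` T \<subseteq> {0}" "f ` S \<subseteq> {1}"
    using Urysohn_lemma[of euclidean T S 0 1] assms(2-4) by (auto simp: disjnt_def)
  have "continuous_on UNIV f"
    using f(1) continuous_map_in_subtopology by (metis continuous_map_iff_continuous2)
  then show ?thesis
    using that f(2,3) by blast
qed

lemma compact_ennreal_positive_lower_bound:
  fixes f :: "'k::topological_space \<Rightarrow> ennreal"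
  assumes "compact E" "continuous_on E f" "\<And>\<zeta>. \<zeta> \<in> E \<Longrightarrow> f \<zeta> \<noteq> 0"
  obtains \<eta> :: real where "0 < \<eta>" "\<And>\<zeta>. \<zeta> \<in> E \<Longrightarrow> ennreal \<eta> < f \<zeta>"
proof (cases "E = {}")
  case False
  then obtain \<zeta>0 where \<zeta>0: "\<zeta>0 \<in> E" "\<And>\<zeta>. \<zeta> \<in> E \<Longrightarrow> f \<zeta>0 \<le> f \<zeta>"
    using continuous_attains_inf[OF assms(1) _ assms(2)] by blast
  have "0 < f \<zeta>0"
    using assms(3)[OF \<zeta>0(1)] by (simp add: zero_less_iff_neq_zero)
  then obtain y where y: "0 < y" "y < f \<zeta>0"
    using dense by blast
  then have "y \<noteq> top" by auto
  then have "ennreal (enn2real y) = y" "0 < enn2real y"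
    using y(1) by (auto simp: enn2real_positive_iff top.not_eq_extremum)
  then show ?thesis
    using that[of "enn2real y"] y(2) \<zeta>0(2) by (auto intro: less_le_trans)
qed (use that[of 1] in auto)

lemma radon_measureD:
  assumes "radon_measure \<mu>"
  shows "finite_measure \<mu>" "sets \<mu> = sets borel" "space \<mu> = UNIV"
  using assms unfolding radon_measure_def by (auto dest: sets_eq_imp_space_eq)

lemma radon_measure_outer_regular:
  fixes \<nu> :: "'k::t2_space measure"
  assumes \<nu>: "radon_measure \<nu>" and B: "B \<in> sets borel" and "0 < \<epsilon>"
  obtains U where "open U" "B \<subseteq> U" "measure \<nu> U < measure \<nu> B + \<epsilon>"
proof -
  interpret finite_measure \<nu>
    using radon_measureD(1)[OF \<nu>] .
  have sets: "sets \<nu> = sets borel" and space: "space \<nu> = UNIV"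
    using radon_measureD[OF \<nu>] by auto
  have compl: "measure \<nu> (UNIV - X) = measure \<nu> UNIV - measure \<nu> X" if "X \<in> sets borel" for X
    using finite_measure_compl[of X] that sets space by simp
  show ?thesis
  proof (cases "measure \<nu> (UNIV - B) < \<epsilon>")
    case True
    then show ?thesis
      using that[of UNIV] compl[OF B] by auto
  next
    case False
    then have "ennreal (measure \<nu> (UNIV - B) - \<epsilon>) < emeasure \<nu> (UNIV - B)"
      using \<open>0 < \<epsilon>\<close> by (simp add: emeasure_eq_measure ennreal_less_iff)
    also have "\<dots> = (SUP C \<in> {C. compact C \<and> C \<subseteq> UNIV - B}. emeasure \<nu> C)"
      using \<nu> B by (auto simp: radon_measure_def)
    finally obtain C where C: "compact C" "C \<subseteq> UNIV - B"
      "ennreal (measure \<nu> (UNIV - B) - \<epsilon>) < emeasure \<nu> C"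
      by (auto simp: less_SUP_iff)
    have "closed C"
      using C(1) by (rule compact_imp_closed)
    moreover have "measure \<nu> (UNIV - B) - \<epsilon> < measure \<nu> C"
      using C(3) False \<open>0 < \<epsilon>\<close> by (simp add: emeasure_eq_measure ennreal_less_iff)
    ultimately show ?thesis
      using that[of "UNIV - C"] C(2) compl[OF B] compl[of C] by (auto simp: borel_closed)
  qed
qed

lemma radon_measure_null_if_compact_subsets_null:
  assumes "radon_measure \<mu>" "B \<in> sets borel"
    and "\<And>K. compact K \<Longrightarrow> K \<subseteq> B \<Longrightarrow> measure \<mu> K = 0"
  shows "B \<in> null_sets \<mu>"
proof -
  interpret finite_measure \<mu>
    using radon_measureD(1)[OF assms(1)] .
  have "emeasure \<mu> B = (SUP K \<in> {K. compact K \<and> K \<subseteq> B}. emeasure \<mu> K)"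
    using assms(1,2) by (auto simp: radon_measure_def)
  also have "\<dots> = 0"
    using assms(3) by (intro SUP_eq_const) (auto simp: emeasure_eq_measure)
  finally show ?thesis
    using assms(1,2) radon_measureD(2) by auto
qed

lemma concentrated_on_null_outside:
  assumes "concentrated_on \<mu> S" "X \<in> sets \<mu>" "X \<inter> S = {}"
  shows "X \<in> null_sets \<mu>"
proof -
  obtain N where N: "N \<in> null_sets \<mu>" "space \<mu> - S \<subseteq> N"
    using assms(1) by (auto simp: concentrated_on_def)
  have "X \<subseteq> N"
    using N(2) assms(3) sets.sets_into_space[OF assms(2)] by blast
  then show ?thesis
    using null_sets_subset[OF N(1) assms(2)] by blast
qed

lemma Gset_continuous: "g \<in> Gset e \<Longrightarrow> continuous_on UNIV g"
  by (simp add: Gset_def)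

lemma meas_preceq_measure_le:
  assumes \<mu>: "radon_measure \<mu>" and \<nu>: "radon_measure \<nu>" and prec: "meas_preceq e \<mu> \<nu>"
    and g: "g \<in> Gset e" and X: "X \<in> sets borel" and Y: "Y \<in> sets borel"
    and lower: "\<And>\<zeta>. indicator X \<zeta> \<le> g \<zeta>" and upper: "\<And>\<zeta>. g \<zeta> \<le> indicator Y \<zeta> + c"
  shows "measure \<mu> X \<le> measure \<nu> Y + c * measure \<nu> UNIV"
proof -
  interpret \<mu>: finite_measure \<mu> using radon_measureD(1)[OF \<mu>] .
  interpret \<nu>: finite_measure \<nu> using radon_measureD(1)[OF \<nu>] .
  have g_borel: "g \<in> borel_measurable borel"
    using Gset_continuous[OF g] by (rule borel_measurable_continuous_onI)
  have "norm (g \<zeta>) \<le> 1 + \<bar>c\<bar>" for \<zeta>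
  proof -
    have "0 \<le> g \<zeta>"
      using order_trans[OF indicator_pos_le lower] .
    moreover have "g \<zeta> \<le> 1 + \<bar>c\<bar>"
      using upper[of \<zeta>] indicator_le_1[of Y \<zeta>, where 'a=real] by linarith
    ultimately show ?thesis by simp
  qed
  moreover have "g \<in> borel_measurable \<mu>" "g \<in> borel_measurable \<nu>"
    using g_borel measurable_cong_sets[OF radon_measureD(2)[OF \<mu>] refl]
      measurable_cong_sets[OF radon_measureD(2)[OF \<nu>] refl] by auto
  ultimately have "integrable \<mu> g" "integrable \<nu> g"
    by (auto intro!: \<mu>.integrable_const_bound[where B="1 + \<bar>c\<bar>"]
        \<nu>.integrable_const_bound[where B="1 + \<bar>c\<bar>"])
  moreover have "integrable \<mu> (indicator X :: _ \<Rightarrow> real)" "integrable \<nu> (indicator Y :: _ \<Rightarrow> real)"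
    using X Y radon_measureD(2)[OF \<mu>] radon_measureD(2)[OF \<nu>]
    by (auto simp: less_top[symmetric])
  ultimately have "measure \<mu> X \<le> integral\<^sup>L \<mu> g"
    using integral_mono[of \<mu> "indicator X" g] lower radon_measureD(3)[OF \<mu>] by simp
  also have "\<dots> \<le> integral\<^sup>L \<nu> g"
    using prec g by (simp add: meas_preceq_def)
  also have "\<dots> \<le> integral\<^sup>L \<nu> (\<lambda>\<zeta>. indicator Y \<zeta> + c)"
    using upper \<open>integrable \<nu> g\<close> \<open>integrable \<nu> (indicator Y)\<close>
    by (intro integral_mono) auto
  also have "\<dots> = measure \<nu> Y + c * measure \<nu> UNIV"
    using \<open>integrable \<nu> (indicator Y)\<close> radon_measureD(3)[OF \<nu>] by (simp add: mult.commute)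
  finally show ?thesis .
qed

(* The function g_h of the header; its junk value 0 on the diagonal x = y is never used. *)
definition lip_weight :: "('a::metric_space \<Rightarrow> real) \<Rightarrow> 'a \<Rightarrow> 'a \<Rightarrow> real" where
  "lip_weight h x y = min 1 ((h x + h y) / dist x y)"

lemma lip_weight_nonneg: "(\<And>x. 0 \<le> h x) \<Longrightarrow> 0 \<le> lip_weight h x y"
  by (simp add: lip_weight_def add_nonneg_nonneg)

lemma lip_weight_le_1: "lip_weight h x y \<le> 1"
  by (simp add: lip_weight_def)

lemma lip_weight_le: "lip_weight h x y \<le> (h x + h y) / dist x y"
  by (simp add: lip_weight_def)

lemma lip_weight_eq_1: "x \<noteq> y \<Longrightarrow> dist x y \<le> h x + h y \<Longrightarrow> lip_weight h x y = 1"
  by (simp add: lip_weight_def)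

lemma lip_weight_eq_0: "h x = 0 \<Longrightarrow> h y = 0 \<Longrightarrow> lip_weight h x y = 0"
  by (simp add: lip_weight_def)

lemma dist_mult_lip_weight:
  "x \<noteq> y \<Longrightarrow> dist x y * lip_weight h x y = min (dist x y) (h x + h y)"
  by (simp add: lip_weight_def min_mult_distrib_left)

lemma lip_weight_triangle:
  assumes lip: "\<And>x y. \<bar>h x - h y\<bar> \<le> dist x y" and nonneg: "\<And>x. 0 \<le> h x"
    and "x \<noteq> u" "u \<noteq> y" "x \<noteq> y"
  shows "dist x y * lip_weight h x y \<le> dist x u * lip_weight h x u + dist u y * lip_weight h u y"
proof -
  have "dist x y \<le> dist x u + dist u y" "h x \<le> h u + dist x u" "h y \<le> h u + dist u y"
    using dist_triangle[of x y u] lip[of x u] lip[of y u] by (auto simp: dist_commute)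
  then have "min (dist x y) (h x + h y) \<le> min (dist x u) (h x + h u) + min (dist u y) (h u + h y)"
    using nonneg[of u] by (auto simp: min_def)
  then show ?thesis
    using assms(3-5) by (simp add: dist_mult_lip_weight)
qed

lemma Gset_extension_lip_weight:
  fixes e :: "('a::metric_space \<times> 'a) \<Rightarrow> 'k::t2_space"
  assumes e: "stone_cech_offdiag e"
    and lip: "\<And>x y. \<bar>h x - h y\<bar> \<le> dist x y" and nonneg: "\<And>x. 0 \<le> h x"
  obtains g where "g \<in> Gset e" "\<And>x y. x \<noteq> y \<Longrightarrow> g (e (x, y)) = lip_weight h x y"
    "\<And>\<zeta>. 0 \<le> g \<zeta>" "\<And>\<zeta>. g \<zeta> \<le> 1"
proof -
  let ?w = "\<lambda>z. lip_weight h (fst z) (snd z)"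
  have "continuous_on UNIV h"
    using lip by (intro lipschitz_on_continuous_on[of 1]) (auto simp: lipschitz_on_def dist_real_def)
  then have "continuous_on offdiag ?w"
    unfolding lip_weight_def
    by (intro continuous_intros continuous_on_compose2[OF \<open>continuous_on UNIV h\<close>])
      (auto simp: offdiag_def)
  moreover have "bounded (?w ` offdiag)"
    using lip_weight_nonneg[of h, OF nonneg] lip_weight_le_1
    by (intro boundedI[where B=1]) auto
  ultimately obtain F :: "'k \<Rightarrow> real"
    where F: "continuous_on UNIV F" "\<And>z. z \<in> offdiag \<Longrightarrow> F (e z) = ?w z"
    using e unfolding stone_cech_offdiag_def by blast
  define g where "g \<zeta> = max 0 (min 1 (F \<zeta>))" for \<zeta>
  have g_e: "g (e (x, y)) = lip_weight h x y" if "x \<noteq> y" for x y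
    using F(2)[of "(x, y)"] that lip_weight_nonneg[of h, OF nonneg, of x y] lip_weight_le_1[of h x y]
    by (simp add: g_def offdiag_def)
  have "g \<in> Gset e"
    unfolding Gset_def
  proof (intro CollectI conjI allI impI)
    show "continuous_on UNIV g"
      unfolding g_def by (intro continuous_intros F(1))
    fix x u y :: 'a assume "x \<noteq> u \<and> u \<noteq> y \<and> x \<noteq> y"
    then show "dist x y * g (e (x, y)) \<le> dist x u * g (e (x, u)) + dist u y * g (e (u, y))"
      using lip_weight_triangle[OF lip nonneg, of x u y] by (simp add: g_e)
  qed
  then show ?thesis
    using that g_e by (simp add: g_def)
qed

lemma lipschitz_bump:
  fixes f :: "'a::metric_space \<Rightarrow> real"
  assumes "0 < \<delta>" and modulus: "\<And>x y. dist x y < \<delta> \<Longrightarrow> \<bar>f x - f y\<bar> < b - a"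
    and "\<exists>x. b < f x"
  obtains h where "\<And>x y. \<bar>h x - h y\<bar> \<le> dist x y" "\<And>x. 0 \<le> h x" "\<And>x. h x \<le> \<delta>"
    "\<And>x. b < f x \<Longrightarrow> h x = \<delta>" "\<And>x. 0 < h x \<Longrightarrow> a < f x"
proof
  define S where "S = {x. b < f x}"
  have "S \<noteq> {}"
    using assms(3) by (simp add: S_def)
  show "\<bar>max 0 (\<delta> - infdist x S) - max 0 (\<delta> - infdist y S)\<bar> \<le> dist x y" for x y
    using infdist_triangle_abs[of x S y] by (simp add: max_def abs_le_iff)
  show "0 \<le> max 0 (\<delta> - infdist x S)" "max 0 (\<delta> - infdist x S) \<le> \<delta>" for x
    using \<open>0 < \<delta>\<close> by (auto simp: infdist_nonneg)
  show "max 0 (\<delta> - infdist x S) = \<delta>" if "b < f x" for x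
    using that \<open>0 < \<delta>\<close> by (simp add: S_def)
  show "a < f x" if "0 < max 0 (\<delta> - infdist x S)" for x
  proof -
    have "infdist x S < \<delta>"
      using that by simp
    then obtain s where "s \<in> S" "dist x s < \<delta>"
      using \<open>S \<noteq> {}\<close> by (auto simp: infdist_notempty cInf_less_iff)
    then show ?thesis
      using modulus[of x s] by (auto simp: S_def)
  qed
qed

lemma dist_excess_lipschitz:
  "\<bar>max 0 (dist x base - r) - max 0 (dist y base - r)\<bar> \<le> dist x y"
  using dist_triangle[of x base y] dist_triangle[of y base x]
  by (auto simp: max_def abs_if dist_commute)

lemma lip_weight_dist_excess_ge:
  assumes "x \<noteq> y" "0 < \<epsilon>" "0 \<le> r" "2 * r / \<epsilon> < dist x base \<or> 2 * r / \<epsilon> < dist y base"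
  shows "1 - \<epsilon> \<le> lip_weight (\<lambda>z. max 0 (dist z base - r)) x y"
proof (cases "\<epsilon> < 1")
  case True
  let ?a = "dist x base" and ?b = "dist y base"
  have "2 * r < \<epsilon> * ?a \<or> 2 * r < \<epsilon> * ?b"
    using assms(2,4) by (auto simp: field_simps)
  moreover have "0 \<le> \<epsilon> * ?a" "0 \<le> \<epsilon> * ?b"
    using assms(2) by auto
  ultimately have "2 * r < \<epsilon> * (?a + ?b)"
    by (auto simp: distrib_left)
  then have "(1 - \<epsilon>) * (?a + ?b) \<le> max 0 (?a - r) + max 0 (?b - r)"
    by (auto simp: algebra_simps max_def)
  moreover have "(1 - \<epsilon>) * dist x y \<le> (1 - \<epsilon>) * (?a + ?b)"
    using True dist_triangle3[of x y base] by (intro mult_left_mono) (auto simp: dist_commute)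
  ultimately have "(1 - \<epsilon>) * dist x y \<le> max 0 (?a - r) + max 0 (?b - r)"
    by linarith
  then have "1 - \<epsilon> \<le> (max 0 (?a - r) + max 0 (?b - r)) / dist x y"
    using assms(1) by (simp add: pos_le_divide_eq)
  then show ?thesis
    using assms(2) by (simp add: lip_weight_def)
qed (auto intro: order_trans[OF _ lip_weight_nonneg])

locale offdiag_compactification =
  fixes e :: "('a::metric_space \<times> 'a) \<Rightarrow> 'k::t2_space"
    and j :: "'a \<Rightarrow> 'l::t2_space"
    and p1 p2 :: "'k \<Rightarrow> 'l"
  assumes stone_cech: "stone_cech_offdiag e"
    and p1_cont: "continuous_on UNIV p1"
    and p1_ext: "\<forall>z\<in>offdiag. p1 (e z) = j (fst z)"
    and p2_cont: "continuous_on UNIV p2"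
    and p2_ext: "\<forall>z\<in>offdiag. p2 (e z) = j (snd z)"
begin

lemma compact_UNIV: "compact (UNIV :: 'k set)"
  using stone_cech by (simp add: stone_cech_offdiag_def)

lemma p1_e [simp]: "x \<noteq> y \<Longrightarrow> p1 (e (x, y)) = j x"
  using p1_ext by (simp add: offdiag_def)

lemma p2_e [simp]: "x \<noteq> y \<Longrightarrow> p2 (e (x, y)) = j y"
  using p2_ext by (simp add: offdiag_def)

lemma compact_if_closed: "closed (S :: 'k set) \<Longrightarrow> compact S"
  using compact_Int_closed[OF compact_UNIV, of S] by simp

lemma continuous_on_p1_comp: "continuous_on UNIV F \<Longrightarrow> continuous_on UNIV (\<lambda>\<zeta>. F (p1 \<zeta>))"
  and continuous_on_p2_comp: "continuous_on UNIV F \<Longrightarrow> continuous_on UNIV (\<lambda>\<zeta>. F (p2 \<zeta>))"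
  by (auto intro: continuous_on_compose2 p1_cont p2_cont)

lemma offdiag_transfer:
  assumes "P \<zeta>" and "open {\<zeta>. P \<zeta>}" "closed {\<zeta>. Q \<zeta>}"
    and "\<And>x y. x \<noteq> y \<Longrightarrow> P (e (x, y)) \<Longrightarrow> Q (e (x, y))"
  shows "Q \<zeta>"
proof (rule ccontr)
  have "closure (e ` offdiag) = UNIV"
    using stone_cech by (simp add: stone_cech_offdiag_def)
  moreover have "open ({\<zeta>. P \<zeta>} - {\<zeta>. Q \<zeta>})"
    using assms(2,3) by (rule open_Diff)
  moreover assume "\<not> Q \<zeta>"
  ultimately have "({\<zeta>. P \<zeta>} - {\<zeta>. Q \<zeta>}) \<inter> e ` offdiag \<noteq> {}"
    using open_Int_closure_eq_empty assms(1) by blast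
  then show False
    using assms(4) by (auto simp: offdiag_def)
qed

lemma lip_weight_extension_eq_0:
  assumes g: "continuous_on UNIV g" and ext: "\<And>x y. x \<noteq> y \<Longrightarrow> g (e (x, y)) = lip_weight h x y"
    and "P \<zeta>" "open {\<zeta>. P \<zeta>}" and vanish: "\<And>x y. x \<noteq> y \<Longrightarrow> P (e (x, y)) \<Longrightarrow> h x = 0 \<and> h y = 0"
  shows "g \<zeta> = 0"
  using assms(3,4)
proof (rule offdiag_transfer)
  show "closed {\<zeta>. g \<zeta> = 0}"
    using g by (intro closed_Collect_eq continuous_on_const)
qed (use ext vanish in \<open>simp add: lip_weight_eq_0\<close>)

end

locale offdiag_compactification_base = offdiag_compactification e j p1 p2
  for e :: "('a::metric_space \<times> 'a) \<Rightarrow> 'k::t2_space" and j :: "'a \<Rightarrow> 'l::t2_space" and p1 p2 +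
  fixes d0bar :: "'l \<Rightarrow> ennreal" and base :: 'a
  assumes d0_cont: "continuous_on UNIV d0bar"
    and d0_ext: "\<forall>x. d0bar (j x) = ennreal (dist x base)"
begin

definition finite_part :: "'k set" where
  "finite_part = {\<zeta>. d0bar (p1 \<zeta>) < \<infinity> \<and> d0bar (p2 \<zeta>) < \<infinity>}"

lemma d0_p1_cont: "continuous_on UNIV (\<lambda>\<zeta>. d0bar (p1 \<zeta>))"
  and d0_p2_cont: "continuous_on UNIV (\<lambda>\<zeta>. d0bar (p2 \<zeta>))"
  using d0_cont by (rule continuous_on_p1_comp, rule continuous_on_p2_comp)

lemma open_finite_part: "open finite_part"
  unfolding finite_part_def
  by (intro open_Collect_conj open_Collect_less d0_p1_cont d0_p2_cont continuous_on_const)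

lemma dist_excess_extension_ge_1:
  assumes g: "continuous_on UNIV g"
    and ext: "\<And>x y. x \<noteq> y \<Longrightarrow> g (e (x, y)) = lip_weight (\<lambda>z. max 0 (dist z base - r)) x y"
    and "0 \<le> r" "\<zeta> \<notin> finite_part"
  shows "1 \<le> g \<zeta>"
proof (rule field_le_epsilon)
  fix \<epsilon> :: real assume "0 < \<epsilon>"
  let ?R = "ennreal (2 * r / \<epsilon>)"
  have "d0bar (p1 \<zeta>) = \<infinity> \<or> d0bar (p2 \<zeta>) = \<infinity>"
    using \<open>\<zeta> \<notin> finite_part\<close> by (auto simp: finite_part_def less_top[symmetric])
  then have "?R < d0bar (p1 \<zeta>) \<or> ?R < d0bar (p2 \<zeta>)"
    by auto
  then have "1 - \<epsilon> \<le> g \<zeta>"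
  proof (rule offdiag_transfer[where P = "\<lambda>\<zeta>. ?R < d0bar (p1 \<zeta>) \<or> ?R < d0bar (p2 \<zeta>)"
        and Q = "\<lambda>\<zeta>. 1 - \<epsilon> \<le> g \<zeta>"])
    show "open {\<zeta>. ?R < d0bar (p1 \<zeta>) \<or> ?R < d0bar (p2 \<zeta>)}"
      using d0_p1_cont d0_p2_cont by (intro open_Collect_disj open_Collect_less continuous_on_const)
    show "closed {\<zeta>. 1 - \<epsilon> \<le> g \<zeta>}"
      using g by (intro closed_Collect_le continuous_on_const)
  qed (use lip_weight_dist_excess_ge[of _ _ \<epsilon> r base] \<open>0 < \<epsilon>\<close> \<open>0 \<le> r\<close> ext d0_ext
      in \<open>auto simp: ennreal_less_iff\<close>)
  then show "1 \<le> g \<zeta> + \<epsilon>"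
    by simp
qed

lemma dist_excess_extension_eq_0:
  assumes g: "continuous_on UNIV g"
    and ext: "\<And>x y. x \<noteq> y \<Longrightarrow> g (e (x, y)) = lip_weight (\<lambda>z. max 0 (dist z base - r)) x y"
    and "d0bar (p1 \<zeta>) < ennreal r \<and> d0bar (p2 \<zeta>) < ennreal r"
  shows "g \<zeta> = 0"
proof (rule lip_weight_extension_eq_0[where P = "\<lambda>\<zeta>. d0bar (p1 \<zeta>) < ennreal r \<and> d0bar (p2 \<zeta>) < ennreal r",
      OF g ext assms(3)])
  show "open {\<zeta>. d0bar (p1 \<zeta>) < ennreal r \<and> d0bar (p2 \<zeta>) < ennreal r}"
    using d0_p1_cont d0_p2_cont by (intro open_Collect_conj open_Collect_less continuous_on_const)
qed (use d0_ext in \<open>auto simp: ennreal_less_iff\<close>)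

lemma compl_finite_part_eq_INT:
  "- finite_part = (\<Inter>n. {\<zeta>. ennreal (real n) \<le> d0bar (p1 \<zeta>) \<or> ennreal (real n) \<le> d0bar (p2 \<zeta>)})"
proof (intro equalityI subsetI)
  fix \<zeta> assume \<zeta>: "\<zeta> \<in> (\<Inter>n. {\<zeta>. ennreal (real n) \<le> d0bar (p1 \<zeta>) \<or> ennreal (real n) \<le> d0bar (p2 \<zeta>)})"
  show "\<zeta> \<in> - finite_part"
  proof
    assume "\<zeta> \<in> finite_part"
    then obtain n where "d0bar (p1 \<zeta>) + d0bar (p2 \<zeta>) < of_nat n"
      using ennreal_Ex_less_of_nat[of "d0bar (p1 \<zeta>) + d0bar (p2 \<zeta>)"] by (auto simp: finite_part_def)
    then have "d0bar (p1 \<zeta>) < ennreal (real n) \<and> d0bar (p2 \<zeta>) < ennreal (real n)"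
      unfolding ennreal_of_nat_eq_real_of_nat
      by (meson add_increasing add_increasing2 le_less_trans order_refl zero_le)
    then show False
      using \<zeta> by (auto simp: not_le[symmetric])
  qed
qed (auto simp: finite_part_def less_top[symmetric])

lemma measure_outside_finite_part_le:
  assumes \<mu>: "radon_measure \<mu>" and \<nu>: "radon_measure \<nu>" and prec: "meas_preceq e \<mu> \<nu>"
  shows "measure \<mu> (- finite_part) \<le> measure \<nu> (- finite_part)"
proof -
  interpret \<nu>: finite_measure \<nu>
    using radon_measureD(1)[OF \<nu>] .
  define W where "W n = {\<zeta>. ennreal (real n) \<le> d0bar (p1 \<zeta>) \<or> ennreal (real n) \<le> d0bar (p2 \<zeta>)}"
    for n :: nat
  have W_borel: "W n \<in> sets borel" for n
    unfolding W_def using d0_p1_cont d0_p2_cont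
    by (intro borel_closed closed_Collect_disj closed_Collect_le continuous_on_const)
  have outside_borel: "- finite_part \<in> sets borel"
    using open_finite_part by (simp add: borel_open sets.compl_sets)
  have "measure \<mu> (- finite_part) \<le> measure \<nu> (W n)" for n
  proof -
    obtain g where g: "g \<in> Gset e"
      "\<And>x y. x \<noteq> y \<Longrightarrow> g (e (x, y)) = lip_weight (\<lambda>z. max 0 (dist z base - real n)) x y"
      "\<And>\<zeta>. 0 \<le> g \<zeta>" "\<And>\<zeta>. g \<zeta> \<le> 1"
      using Gset_extension_lip_weight[OF stone_cech dist_excess_lipschitz] by auto
    have "measure \<mu> (- finite_part) \<le> measure \<nu> (W n) + 0 * measure \<nu> UNIV"
    proof (rule meas_preceq_measure_le[OF \<mu> \<nu> prec g(1) outside_borel W_borel])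
      show "indicator (- finite_part) \<zeta> \<le> g \<zeta>" for \<zeta>
        using dist_excess_extension_ge_1[OF Gset_continuous[OF g(1)] g(2), of \<zeta>] g(3)
        by (auto split: split_indicator)
      show "g \<zeta> \<le> indicator (W n) \<zeta> + 0" for \<zeta>
        using dist_excess_extension_eq_0[OF Gset_continuous[OF g(1)] g(2), of \<zeta>] g(4)[of \<zeta>]
        by (auto simp: W_def not_le split: split_indicator)
    qed
    then show ?thesis
      by simp
  qed
  moreover have "(\<lambda>n. measure \<nu> (W n)) \<longlonglongrightarrow> measure \<nu> (- finite_part)"
  proof -
    have "decseq W"
      by (auto simp: decseq_def W_def intro: order_trans[rotated])
    then show ?thesis
      using \<nu>.finite_Lim_measure_decseq[of W] W_borel radon_measureD(2)[OF \<nu>]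
      by (auto simp: compl_finite_part_eq_INT W_def)
  qed
  ultimately show ?thesis
    using LIMSEQ_le_const by blast
qed

lemma compl_finite_part_null:
  assumes \<mu>: "radon_measure \<mu>" and \<nu>: "radon_measure \<nu>" and prec: "meas_preceq e \<mu> \<nu>"
    and null: "- finite_part \<in> null_sets \<nu>"
  shows "- finite_part \<in> null_sets \<mu>"
proof -
  have "measure \<mu> (- finite_part) \<le> 0"
    using measure_outside_finite_part_le[OF \<mu> \<nu> prec] null_setsD1[OF null] by (simp add: measure_def)
  then have "measure \<mu> (- finite_part) = 0"
    using measure_nonneg[of \<mu> "- finite_part"] by linarith
  moreover have "- finite_part \<in> sets \<mu>"
    using open_finite_part radon_measureD(2)[OF \<mu>] by (simp add: borel_open sets.compl_sets)
  ultimately show ?thesis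
    using radon_measureD(1)[OF \<mu>] by (simp add: finite_measure.emeasure_eq_measure null_setsI)
qed

end

locale offdiag_compactification_dist = offdiag_compactification e j p1 p2
  for e :: "('a::metric_space \<times> 'a) \<Rightarrow> 'k::t2_space" and j :: "'a \<Rightarrow> 'l::t2_space" and p1 p2 +
  fixes dbar :: "'k \<Rightarrow> ennreal"
  assumes samuel: "samuel_compactification j"
    and dbar_cont: "continuous_on UNIV dbar"
    and dbar_ext: "\<forall>z\<in>offdiag. dbar (e z) = ennreal (dist (fst z) (snd z))"
begin

lemma dbar_e [simp]: "x \<noteq> y \<Longrightarrow> dbar (e (x, y)) = ennreal (dist x y)"
  using dbar_ext by (simp add: offdiag_def)

lemma open_meets_range_j:
  assumes "open V" "\<xi> \<in> V"
  obtains x where "j x \<in> V"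
proof -
  have "closure (range j) = UNIV"
    using samuel by (simp add: samuel_compactification_def)
  then show ?thesis
    using open_Int_closure_eq_empty[OF assms(1)] assms(2) that by blast
qed

lemma uniform_modulus_along_j:
  fixes F :: "'l \<Rightarrow> real"
  assumes "continuous_on UNIV F" "0 < \<epsilon>"
  obtains \<delta> where "0 < \<delta>" "\<And>x y. dist x y < \<delta> \<Longrightarrow> \<bar>F (j x) - F (j y)\<bar> < \<epsilon>"
proof -
  have "uniformly_continuous_on UNIV (F \<circ> j)"
    using samuel assms(1) by (simp add: samuel_compactification_def)
  then show ?thesis
    using assms(2) that unfolding uniformly_continuous_on_def
    by (metis comp_apply dist_real_def iso_tuple_UNIV_I)
qed

lemma p1_eq_p2_if_dbar_zero:
  assumes "dbar \<zeta> = 0"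
  shows "p1 \<zeta> = p2 \<zeta>"
proof (rule ccontr)
  assume "p1 \<zeta> \<noteq> p2 \<zeta>"
  moreover have "compact (UNIV :: 'l set)"
    using samuel by (simp add: samuel_compactification_def)
  ultimately obtain F :: "'l \<Rightarrow> real"
    where F: "continuous_on UNIV F" "F (p1 \<zeta>) = 1" "F (p2 \<zeta>) = 0"
    using compact_t2_Urysohn[of "{p1 \<zeta>}" "{p2 \<zeta>}"] by auto
  obtain \<delta> where \<delta>: "0 < \<delta>" "\<And>x y. dist x y < \<delta> \<Longrightarrow> \<bar>F (j x) - F (j y)\<bar> < 1/2"
    using uniform_modulus_along_j[OF F(1), of "1/2"] by auto
  have "dbar \<zeta> < ennreal \<delta>"
    using assms \<delta>(1) by simp
  then have "\<bar>F (p1 \<zeta>) - F (p2 \<zeta>)\<bar> \<le> 1/2"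
  proof (rule offdiag_transfer)
    show "open {\<zeta>. dbar \<zeta> < ennreal \<delta>}"
      using dbar_cont by (intro open_Collect_less continuous_on_const)
    show "closed {\<zeta>. \<bar>F (p1 \<zeta>) - F (p2 \<zeta>)\<bar> \<le> 1/2}"
      using F(1) by (intro closed_Collect_le continuous_intros continuous_on_p1_comp continuous_on_p2_comp)
  qed (use \<delta>(2) in \<open>auto simp: ennreal_less_iff less_imp_le\<close>)
  then show False
    using F(2,3) by simp
qed

definition diag_over :: "'l set \<Rightarrow> 'k set" where
  "diag_over C = {\<zeta>. dbar \<zeta> = 0 \<and> p1 \<zeta> \<in> C \<and> p2 \<zeta> \<in> C}"

lemma diag_over_eq_vimage: "diag_over C = dbar -` {0} \<inter> p1 -` C \<inter> p2 -` C"
  by (auto simp: diag_over_def)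

lemma closed_diag_over: "closed C \<Longrightarrow> closed (diag_over C)"
  unfolding diag_over_eq_vimage
  by (intro closed_Int closed_vimage dbar_cont p1_cont p2_cont closed_singleton)

lemma sets_diag_over: "A \<in> sets borel \<Longrightarrow> diag_over A \<in> sets borel"
proof -
  have "dbar -` {0} \<in> sets borel"
    using dbar_cont by (intro borel_closed closed_vimage closed_singleton)
  moreover have "p1 \<in> borel_measurable borel" "p2 \<in> borel_measurable borel"
    using p1_cont p2_cont by (auto intro: borel_measurable_continuous_onI)
  moreover assume "A \<in> sets borel"
  ultimately show ?thesis
    unfolding diag_over_eq_vimage by (intro sets.Int) (auto dest: measurable_sets)
qed

lemma diag_neighbourhood_separation:
  assumes "closed C" "open U" "diag_over C \<subseteq> U"
  obtains F :: "'l \<Rightarrow> real" and \<eta> :: real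
  where "continuous_on UNIV F" "\<And>\<xi>. \<xi> \<in> C \<Longrightarrow> F \<xi> = 1" "0 < \<eta>"
    "\<And>\<zeta>. dbar \<zeta> \<le> ennreal \<eta> \<Longrightarrow> 1/4 \<le> F (p1 \<zeta>) \<or> 1/4 \<le> F (p2 \<zeta>) \<Longrightarrow> \<zeta> \<in> U"
proof -
  define Q where "Q = dbar -` {0} - U"
  have "closed Q"
    unfolding Q_def using assms(2) by (intro closed_Diff closed_vimage dbar_cont) auto
  then have "compact (p1 ` Q)"
    by (intro compact_continuous_image continuous_on_subset[OF p1_cont] compact_if_closed) auto
  moreover have "C \<inter> p1 ` Q = {}"
    using assms(3) p1_eq_p2_if_dbar_zero by (fastforce simp: Q_def diag_over_def)
  moreover have "compact (UNIV :: 'l set)"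
    using samuel by (simp add: samuel_compactification_def)
  ultimately obtain F :: "'l \<Rightarrow> real" where F: "continuous_on UNIV F"
    "\<And>\<xi>. \<xi> \<in> C \<Longrightarrow> F \<xi> = 1" "\<And>\<xi>. \<xi> \<in> p1 ` Q \<Longrightarrow> F \<xi> = 0"
    using compact_t2_Urysohn[of C "p1 ` Q"] assms(1) compact_imp_closed by metis
  define E where "E = {\<zeta>. 1/4 \<le> F (p1 \<zeta>) \<or> 1/4 \<le> F (p2 \<zeta>)} - U"
  have "closed E"
    unfolding E_def using F(1) assms(2)
    by (intro closed_Diff closed_Collect_disj closed_Collect_le continuous_on_const
        continuous_on_p1_comp continuous_on_p2_comp)
  moreover have "dbar \<zeta> \<noteq> 0" if "\<zeta> \<in> E" for \<zeta>
  proof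
    assume "dbar \<zeta> = 0"
    then have "F (p1 \<zeta>) = 0" "p2 \<zeta> = p1 \<zeta>"
      using that F(3) p1_eq_p2_if_dbar_zero by (auto simp: E_def Q_def)
    then show False
      using that by (simp add: E_def)
  qed
  ultimately obtain \<eta> where "0 < \<eta>" "\<And>\<zeta>. \<zeta> \<in> E \<Longrightarrow> ennreal \<eta> < dbar \<zeta>"
    using compact_ennreal_positive_lower_bound[of E dbar] compact_if_closed
      continuous_on_subset[OF dbar_cont] by blast
  then show ?thesis
    using that[of F \<eta>] F(1,2) by (force simp: E_def not_less[symmetric])
qed

lemma lip_weight_extension_ge_1_on_diagonal:
  fixes F :: "'l \<Rightarrow> real"
  assumes g: "continuous_on UNIV g" and ext: "\<And>x y. x \<noteq> y \<Longrightarrow> g (e (x, y)) = lip_weight h x y"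
    and F: "continuous_on UNIV F" and "0 < \<delta>" "\<And>x. 0 \<le> h x" "\<And>x. b < F (j x) \<Longrightarrow> h x = \<delta>"
    and "dbar \<zeta> = 0" "b < F (p1 \<zeta>)"
  shows "1 \<le> g \<zeta>"
proof -
  have "dbar \<zeta> < ennreal \<delta> \<and> b < F (p1 \<zeta>)"
    using assms(4,7,8) by simp
  then show ?thesis
  proof (rule offdiag_transfer)
    show "open {\<zeta>. dbar \<zeta> < ennreal \<delta> \<and> b < F (p1 \<zeta>)}"
      using dbar_cont continuous_on_p1_comp[OF F]
      by (intro open_Collect_conj open_Collect_less continuous_on_const)
    show "closed {\<zeta>. 1 \<le> g \<zeta>}"
      using g by (intro closed_Collect_le continuous_on_const)
  qed (use ext assms(5,6) in \<open>auto simp: ennreal_less_iff lip_weight_eq_1 add_increasing2\<close>)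
qed

lemma lip_weight_extension_le_off_diagonal:
  assumes g: "continuous_on UNIV g" and ext: "\<And>x y. x \<noteq> y \<Longrightarrow> g (e (x, y)) = lip_weight h x y"
    and "0 < \<eta>" "\<And>x. 0 \<le> h x" "\<And>x. h x \<le> \<delta>" "ennreal \<eta> < dbar \<zeta>"
  shows "g \<zeta> \<le> 2 * \<delta> / \<eta>"
  using assms(6)
proof (rule offdiag_transfer)
  show "open {\<zeta>. ennreal \<eta> < dbar \<zeta>}"
    using dbar_cont by (intro open_Collect_less continuous_on_const)
  show "closed {\<zeta>. g \<zeta> \<le> 2 * \<delta> / \<eta>}"
    using g by (intro closed_Collect_le continuous_on_const)
  fix x y assume "x \<noteq> y" "ennreal \<eta> < dbar (e (x, y))"
  then have "\<eta> < dist x y"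
    using \<open>0 < \<eta>\<close> by (simp add: ennreal_less_iff)
  have "lip_weight h x y \<le> (h x + h y) / dist x y"
    by (rule lip_weight_le)
  also have "\<dots> \<le> 2 * \<delta> / \<eta>"
    using assms(4,5)[of x] assms(4,5)[of y] \<open>\<eta> < dist x y\<close> \<open>0 < \<eta>\<close>
    by (intro frac_le) auto
  finally show "g (e (x, y)) \<le> 2 * \<delta> / \<eta>"
    using ext \<open>x \<noteq> y\<close> by simp
qed

lemma diagonal_test_function:
  fixes F :: "'l \<Rightarrow> real"
  assumes F: "continuous_on UNIV F" and "1/2 < F \<xi>" and "0 < \<eta>" "0 < c"
  obtains g where "g \<in> Gset e" "\<And>\<zeta>. 0 \<le> g \<zeta>" "\<And>\<zeta>. g \<zeta> \<le> 1"
    "\<And>\<zeta>. dbar \<zeta> = 0 \<Longrightarrow> 1/2 < F (p1 \<zeta>) \<Longrightarrow> 1 \<le> g \<zeta>"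
    "\<And>\<zeta>. ennreal \<eta> < dbar \<zeta> \<Longrightarrow> g \<zeta> \<le> c"
    "\<And>\<zeta>. F (p1 \<zeta>) < 1/4 \<Longrightarrow> F (p2 \<zeta>) < 1/4 \<Longrightarrow> g \<zeta> = 0"
proof -
  obtain \<delta>0 where \<delta>0: "0 < \<delta>0" "\<And>x y. dist x y < \<delta>0 \<Longrightarrow> \<bar>F (j x) - F (j y)\<bar> < 1/2 - 1/4"
    using uniform_modulus_along_j[OF F, of "1/2 - 1/4"] by auto
  define \<delta> where "\<delta> = min \<delta>0 (c * \<eta> / 2)"
  have "0 < \<delta>" "2 * \<delta> / \<eta> \<le> c"
    using \<delta>0(1) \<open>0 < \<eta>\<close> \<open>0 < c\<close> by (simp_all add: \<delta>_def pos_divide_le_eq)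
  have "open {\<xi>. 1/2 < F \<xi>}"
    using F by (intro open_Collect_less continuous_on_const)
  then have "\<exists>x. 1/2 < F (j x)"
    using open_meets_range_j[of "{\<xi>. 1/2 < F \<xi>}" \<xi>] \<open>1/2 < F \<xi>\<close> by auto
  moreover have "\<bar>F (j x) - F (j y)\<bar> < 1/2 - 1/4" if "dist x y < \<delta>" for x y
    using \<delta>0(2) that by (simp add: \<delta>_def)
  ultimately obtain h where h: "\<And>x y. \<bar>h x - h y\<bar> \<le> dist x y" "\<And>x. 0 \<le> h x" "\<And>x. h x \<le> \<delta>"
    "\<And>x. 1/2 < F (j x) \<Longrightarrow> h x = \<delta>" "\<And>x. 0 < h x \<Longrightarrow> 1/4 < F (j x)"
    using lipschitz_bump[of \<delta> "\<lambda>x. F (j x)" "1/2" "1/4", OF \<open>0 < \<delta>\<close>] by blast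
  obtain g where g: "g \<in> Gset e" "\<And>x y. x \<noteq> y \<Longrightarrow> g (e (x, y)) = lip_weight h x y"
    "\<And>\<zeta>. 0 \<le> g \<zeta>" "\<And>\<zeta>. g \<zeta> \<le> 1"
    using Gset_extension_lip_weight[OF stone_cech h(1,2)] by blast
  note g_cont = Gset_continuous[OF g(1)]
  show ?thesis
  proof (rule that[OF g(1,3,4)])
    show "1 \<le> g \<zeta>" if "dbar \<zeta> = 0" "1/2 < F (p1 \<zeta>)" for \<zeta>
      using lip_weight_extension_ge_1_on_diagonal[OF g_cont g(2) F \<open>0 < \<delta>\<close> h(2,4) that] .
    show "g \<zeta> \<le> c" if "ennreal \<eta> < dbar \<zeta>" for \<zeta>
      using lip_weight_extension_le_off_diagonal[OF g_cont g(2) \<open>0 < \<eta>\<close> h(2,3) that]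
        \<open>2 * \<delta> / \<eta> \<le> c\<close> by linarith
    show "g \<zeta> = 0" if small: "F (p1 \<zeta>) < 1/4" "F (p2 \<zeta>) < 1/4" for \<zeta>
    proof (rule lip_weight_extension_eq_0[where P = "\<lambda>\<zeta>. F (p1 \<zeta>) < 1/4 \<and> F (p2 \<zeta>) < 1/4",
          OF g_cont g(2)])
      show "F (p1 \<zeta>) < 1/4 \<and> F (p2 \<zeta>) < 1/4"
        using small by simp
      show "open {\<zeta>. F (p1 \<zeta>) < 1/4 \<and> F (p2 \<zeta>) < 1/4}"
        using continuous_on_p1_comp[OF F] continuous_on_p2_comp[OF F]
        by (intro open_Collect_conj open_Collect_less continuous_on_const)
      show "h x = 0 \<and> h y = 0" if "x \<noteq> y" "F (p1 (e (x, y))) < 1/4 \<and> F (p2 (e (x, y))) < 1/4" for x y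
        using that h(2,5)[of x] h(2,5)[of y] by (auto simp: le_less)
    qed
  qed
qed

lemma measure_diag_over_le_neighbourhood:
  assumes \<mu>: "radon_measure \<mu>" and \<nu>: "radon_measure \<nu>" and prec: "meas_preceq e \<mu> \<nu>"
    and "closed C" "open U" "diag_over C \<subseteq> U" "0 < \<epsilon>"
  shows "measure \<mu> (diag_over C) \<le> measure \<nu> U + \<epsilon>"
proof (cases "diag_over C = {}")
  case False
  then obtain \<zeta>0 where \<zeta>0: "\<zeta>0 \<in> diag_over C"
    by blast
  interpret \<nu>: finite_measure \<nu>
    using radon_measureD(1)[OF \<nu>] .
  obtain F :: "'l \<Rightarrow> real" and \<eta> :: real where F: "continuous_on UNIV F" "\<And>\<xi>. \<xi> \<in> C \<Longrightarrow> F \<xi> = 1"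
    "0 < \<eta>" "\<And>\<zeta>. dbar \<zeta> \<le> ennreal \<eta> \<Longrightarrow> 1/4 \<le> F (p1 \<zeta>) \<or> 1/4 \<le> F (p2 \<zeta>) \<Longrightarrow> \<zeta> \<in> U"
    using diag_neighbourhood_separation[OF assms(4-6)] by blast
  define c where "c = \<epsilon> / (measure \<nu> UNIV + 1)"
  have "0 < measure \<nu> UNIV + 1"
    using measure_nonneg[of \<nu> UNIV] by linarith
  then have "0 < c" "c * measure \<nu> UNIV \<le> \<epsilon>"
    using \<open>0 < \<epsilon>\<close> by (simp_all add: c_def field_simps)
  have "1/2 < F (p1 \<zeta>0)"
    using \<zeta>0 F(2) by (simp add: diag_over_def)
  then obtain g where g: "g \<in> Gset e" "\<And>\<zeta>. 0 \<le> g \<zeta>" "\<And>\<zeta>. g \<zeta> \<le> 1"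
    "\<And>\<zeta>. dbar \<zeta> = 0 \<Longrightarrow> 1/2 < F (p1 \<zeta>) \<Longrightarrow> 1 \<le> g \<zeta>"
    "\<And>\<zeta>. ennreal \<eta> < dbar \<zeta> \<Longrightarrow> g \<zeta> \<le> c"
    "\<And>\<zeta>. F (p1 \<zeta>) < 1/4 \<Longrightarrow> F (p2 \<zeta>) < 1/4 \<Longrightarrow> g \<zeta> = 0"
    using diagonal_test_function[OF F(1) _ F(3) \<open>0 < c\<close>] by blast
  define B where "B = {\<zeta>. dbar \<zeta> \<le> ennreal \<eta> \<and> (1/4 \<le> F (p1 \<zeta>) \<or> 1/4 \<le> F (p2 \<zeta>))}"
  have B_borel: "B \<in> sets borel"
    unfolding B_def using dbar_cont continuous_on_p1_comp[OF F(1)] continuous_on_p2_comp[OF F(1)]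
    by (intro borel_closed closed_Collect_conj closed_Collect_disj closed_Collect_le continuous_on_const)
  have "measure \<mu> (diag_over C) \<le> measure \<nu> B + c * measure \<nu> UNIV"
  proof (rule meas_preceq_measure_le[OF \<mu> \<nu> prec g(1) _ B_borel])
    show "diag_over C \<in> sets borel"
      using closed_diag_over[OF \<open>closed C\<close>] by (rule borel_closed)
    show "indicator (diag_over C) \<zeta> \<le> g \<zeta>" for \<zeta>
      using g(2,4)[of \<zeta>] F(2) by (auto simp: diag_over_def split: split_indicator)
    show "g \<zeta> \<le> indicator B \<zeta> + c" for \<zeta>
      using g(3,5,6)[of \<zeta>] \<open>0 < c\<close> by (auto simp: B_def not_le split: split_indicator)
  qed
  also have "measure \<nu> B \<le> measure \<nu> U"
    using F(4) \<open>open U\<close> B_borel radon_measureD(2)[OF \<nu>]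
    by (intro \<nu>.finite_measure_mono) (auto simp: B_def borel_open)
  finally show ?thesis
    using \<open>c * measure \<nu> UNIV \<le> \<epsilon>\<close> by linarith
qed (use \<open>0 < \<epsilon>\<close> in simp)

lemma measure_diag_over_le:
  assumes \<mu>: "radon_measure \<mu>" and \<nu>: "radon_measure \<nu>" and prec: "meas_preceq e \<mu> \<nu>"
    and "closed C"
  shows "measure \<mu> (diag_over C) \<le> measure \<nu> (diag_over C)"
proof (rule field_le_epsilon)
  fix \<epsilon> :: real assume "0 < \<epsilon>"
  have "diag_over C \<in> sets borel"
    using closed_diag_over[OF \<open>closed C\<close>] by (rule borel_closed)
  then obtain U where U: "open U" "diag_over C \<subseteq> U" "measure \<nu> U < measure \<nu> (diag_over C) + \<epsilon> / 2"
    using radon_measure_outer_regular[OF \<nu> _ half_gt_zero[OF \<open>0 < \<epsilon>\<close>]] by blast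
  have "measure \<mu> (diag_over C) \<le> measure \<nu> U + \<epsilon> / 2"
    using \<open>0 < \<epsilon>\<close> by (intro measure_diag_over_le_neighbourhood[OF \<mu> \<nu> prec \<open>closed C\<close> U(1,2)]) simp
  then show "measure \<mu> (diag_over C) \<le> measure \<nu> (diag_over C) + \<epsilon>"
    using U(3) by linarith
qed

lemma diag_over_null:
  assumes \<mu>: "radon_measure \<mu>" and \<nu>: "radon_measure \<nu>" and prec: "meas_preceq e \<mu> \<nu>"
    and A: "A \<in> sets borel" and null: "diag_over A \<in> null_sets \<nu>"
  shows "diag_over A \<in> null_sets \<mu>"
proof (rule radon_measure_null_if_compact_subsets_null[OF \<mu> sets_diag_over[OF A]])
  fix K assume K: "compact K" "K \<subseteq> diag_over A"
  interpret \<mu>: finite_measure \<mu>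
    using radon_measureD(1)[OF \<mu>] .
  interpret \<nu>: finite_measure \<nu>
    using radon_measureD(1)[OF \<nu>] .
  define C where "C = p1 ` K \<union> p2 ` K"
  have "compact C"
    unfolding C_def using K(1)
    by (intro compact_Un compact_continuous_image continuous_on_subset[OF p1_cont]
        continuous_on_subset[OF p2_cont]) auto
  then have "closed C"
    by (rule compact_imp_closed)
  have "K \<subseteq> diag_over C" "diag_over C \<subseteq> diag_over A"
    using K(2) by (auto simp: diag_over_def C_def)
  have "measure \<mu> K \<le> measure \<mu> (diag_over C)"
    using \<open>K \<subseteq> diag_over C\<close> K(1) closed_diag_over[OF \<open>closed C\<close>] radon_measureD(2)[OF \<mu>]
    by (intro \<mu>.finite_measure_mono) (auto intro: borel_closed compact_imp_closed)
  also have "\<dots> \<le> measure \<nu> (diag_over C)"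
    using measure_diag_over_le[OF \<mu> \<nu> prec \<open>closed C\<close>] .
  also have "\<dots> \<le> measure \<nu> (diag_over A)"
    using \<open>diag_over C \<subseteq> diag_over A\<close> null by (intro \<nu>.finite_measure_mono) auto
  also have "\<dots> = 0"
    using null_setsD1[OF null] by (simp add: measure_def)
  finally show "measure \<mu> K = 0"
    using measure_nonneg[of \<mu> K] by linarith
qed

end

theorem proposition3p32:
  fixes e :: "('a::metric_space \<times> 'a) \<Rightarrow> 'k::t2_space"
    and j :: "'a \<Rightarrow> 'l::t2_space"
    and dbar :: "'k \<Rightarrow> ennreal"
    and p1 p2 :: "'k \<Rightarrow> 'l"
    and d0bar :: "'l \<Rightarrow> ennreal"
    and base :: 'a
    and A :: "'l set"
    and \<mu> \<nu> :: "'k measure"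
  assumes complete: "complete (UNIV :: 'a set)"
    and three: "\<exists>x y z :: 'a. x \<noteq> y \<and> y \<noteq> z \<and> x \<noteq> z"
    and beta: "stone_cech_offdiag e"
    and unif: "samuel_compactification j"
    and dbar_cont: "continuous_on UNIV dbar"
    and dbar_ext: "\<forall>z\<in>offdiag. dbar (e z) = ennreal (dist (fst z) (snd z))"
    and p1_cont: "continuous_on UNIV p1"
    and p1_ext: "\<forall>z\<in>offdiag. p1 (e z) = j (fst z)"
    and p2_cont: "continuous_on UNIV p2"
    and p2_ext: "\<forall>z\<in>offdiag. p2 (e z) = j (snd z)"
    and d0_cont: "continuous_on UNIV d0bar"
    and d0_ext: "\<forall>x. d0bar (j x) = ennreal (dist x base)"
    and A_borel: "A \<in> sets (restrict_space borel {\<xi>. d0bar \<xi> < \<infinity>})"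
    and A_sub: "A \<subseteq> {\<xi>. d0bar \<xi> < \<infinity>}"
    and mu: "radon_measure \<mu>"
    and nu: "radon_measure \<nu>"
    and prec: "meas_preceq e \<mu> \<nu>"
    and conc: "concentrated_on \<nu>
      ({z. d0bar (p1 z) < \<infinity> \<and> d0bar (p2 z) < \<infinity>}
        - {z. dbar z = 0 \<and> p1 z \<in> A \<and> p2 z \<in> A})"
  shows "concentrated_on \<mu>
      ({z. d0bar (p1 z) < \<infinity> \<and> d0bar (p2 z) < \<infinity>}
        - {z. dbar z = 0 \<and> p1 z \<in> A \<and> p2 z \<in> A})"
proof -
  interpret base: offdiag_compactification_base e j p1 p2 d0bar base
    using beta p1_cont p1_ext p2_cont p2_ext d0_cont d0_ext by unfold_locales
  interpret dist: offdiag_compactification_dist e j p1 p2 dbar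
    using beta p1_cont p1_ext p2_cont p2_ext unif dbar_cont dbar_ext by unfold_locales
  have R: "{z. d0bar (p1 z) < \<infinity> \<and> d0bar (p2 z) < \<infinity>} = base.finite_part"
    by (simp add: base.finite_part_def)
  have D: "{z. dbar z = 0 \<and> p1 z \<in> A \<and> p2 z \<in> A} = dist.diag_over A"
    by (simp add: dist.diag_over_def)
  have "A \<in> sets borel"
    using A_borel open_Collect_less[OF d0_cont continuous_on_const]
    by (auto simp: sets_restrict_space_iff borel_open)
  then have "- base.finite_part \<in> null_sets \<nu>" "dist.diag_over A \<in> null_sets \<nu>"
    using conc base.open_finite_part dist.sets_diag_over radon_measureD(2)[OF nu] unfolding R D
    by (auto intro: concentrated_on_null_outside simp: borel_open sets.compl_sets)
  then have "- base.finite_part \<union> dist.diag_over A \<in> null_sets \<mu>"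
    using base.compl_finite_part_null[OF mu nu prec] dist.diag_over_null[OF mu nu prec \<open>A \<in> sets borel\<close>]
    by (intro null_sets.Un)
  then show ?thesis
    unfolding R D concentrated_on_def by blast
qed

end
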